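(* Let $1 < p < \infty$ and let $\lambda, \mu, \nu, \alpha$ be real numbers. Let $$H_{\lambda,\mu,\nu} f(y) = \int_{0}^{\infty} \frac{x^{\mu} y^{\nu}}{(x+y)^{\lambda}} f(x)\, dx, \quad y > 0.$$ Then $H_{\lambda,\mu,\nu}$ is bounded from $L^p_\alpha$ to $L^\infty$ if and only if $$\lambda = \mu + \nu + 1 - \frac{\alpha+1}{p} \quad\text{and}\quad p(\mu + 1 - \lambda) < \alpha + 1 < p(\mu + 1),$$ or equivalently, $$\lambda = \mu + \nu + 1 - \frac{\alpha+1}{p} \quad\text{and}\quad 0 < \nu < \lambda.$$
   Context: $L^p_\alpha$ is the space of real-valued measurable functions $f$ on $(0,\infty)$ with $\|f\|_{p,\alpha} = \left(\int_0^\infty |f(x)|^p x^\alpha\,dx\right)^{1/p} < \infty$; $L^\infty$ is the space of real-valued measurable functions on $(0,\infty)$ with finite essential supremum $\|f\|_\infty$. Bounded means: for every $f \in L^p_\alpha$ the defining integral converges, $H_{\lambda,\mu,\nu}f\in L^\infty$, and $\|H_{\lambda,\mu,\nu} f\|_{\infty} \le C\|f\|_{p,\alpha}$ for a constant $C$ independent of $f$. *)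

theory Defs
  imports "HOL-Analysis.Analysis"
begin

definition hkernel :: "real \<Rightarrow> real \<Rightarrow> real \<Rightarrow> real \<Rightarrow> real \<Rightarrow> real" where
  "hkernel lam mu nu x y = x powr mu * y powr nu / (x + y) powr lam"

definition Hop :: "real \<Rightarrow> real \<Rightarrow> real \<Rightarrow> (real \<Rightarrow> real) \<Rightarrow> real \<Rightarrow> real" where
  "Hop lam mu nu f y = (LINT x:{0<..}|lborel. hkernel lam mu nu x y * f x)"

definition wpint :: "real \<Rightarrow> real \<Rightarrow> (real \<Rightarrow> real) \<Rightarrow> ennreal" where
  "wpint p alpha f = (\<integral>\<^sup>+ x\<in>{0<..}. ennreal (\<bar>f x\<bar> powr p * x powr alpha) \<partial>lborel)"

definition in_Lp_alpha :: "real \<Rightarrow> real \<Rightarrow> (real \<Rightarrow> real) \<Rightarrow> bool" where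
  "in_Lp_alpha p alpha f \<longleftrightarrow> set_borel_measurable lborel {0<..} f \<and> wpint p alpha f < \<infinity>"

definition Lp_alpha_norm :: "real \<Rightarrow> real \<Rightarrow> (real \<Rightarrow> real) \<Rightarrow> real" where
  "Lp_alpha_norm p alpha f = (enn2real (wpint p alpha f)) powr (1 / p)"

text \<open>Boundedness of H from L^p_alpha to L^infty: for every f in L^p_alpha the defining
  integral converges for every y > 0, H f is measurable on (0,oo) and
  ess sup |H f| <= C * norm f with C independent of f.\<close>
definition H_bounded :: "real \<Rightarrow> real \<Rightarrow> real \<Rightarrow> real \<Rightarrow> real \<Rightarrow> bool" where
  "H_bounded p alpha lam mu nu \<longleftrightarrow>
     (\<exists>C. \<forall>f. in_Lp_alpha p alpha f \<longrightarrow>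
        (\<forall>y>0. set_integrable lborel {0<..} (\<lambda>x. hkernel lam mu nu x y * f x)) \<and>
        set_borel_measurable lborel {0<..} (Hop lam mu nu f) \<and>
        (AE y in lborel. y > 0 \<longrightarrow> \<bar>Hop lam mu nu f y\<bar> \<le> C * Lp_alpha_norm p alpha f))"

end

theory Submission
  imports Defs
begin

text \<open>Write \<open>e = mu + 1 - (alpha + 1) / p\<close>. Necessity: testing \<open>H\<close> on
  \<open>f = 1\<^bsub>[a,b]\<^esub> x powr (-(alpha + 1) / p)\<close>, whose norm is \<open>ln (b / a) powr (1 / p)\<close>, bounds
  \<open>\<integral>\<^bsub>a..b\<^esub> x powr e * y powr nu * (x + y) powr (-lam) dx / x\<close> by \<open>C * ln (b / a) powr (1 / p)\<close>.
  On the boxes \<open>[c, 2c]\<^sup>2\<close> this forces the homogeneity \<open>lam = e + nu\<close>; with \<open>y\<close> in a fixed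
  interval and \<open>b \<rightarrow> \<infinity>\<close> (resp. \<open>a \<rightarrow> 0\<close>) the left side grows like \<open>ln (b / a)\<close> unless
  \<open>e < lam\<close> (resp. \<open>0 < e\<close>).

  Sufficiency: by Hoelder, \<open>\<bar>H f y\<bar>\<close> is at most the norm of \<open>f\<close> times the \<open>L\<^sup>q\<close> norm of
  \<open>x \<mapsto> hkernel lam mu nu x y * x powr (-alpha / p)\<close>. By homogeneity the dilation \<open>x = y t\<close>
  shows that this \<open>L\<^sup>q\<close> norm does not depend on \<open>y\<close>, and it is finite when \<open>0 < nu < lam\<close>.\<close>

lemma powr_ge_min_scaled:
  fixes c s t z e :: real
  assumes "0 < c" "0 < s" "s * c \<le> z" "z \<le> t * c"
  shows "c powr e * min (s powr e) (t powr e) \<le> z powr e"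
proof (cases "e \<ge> 0")
  case True
  then have "(s * c) powr e \<le> z powr e" using assms by (intro powr_mono2) auto
  then show ?thesis using assms by (simp add: powr_mult min_mult_distrib_left mult.commute)
next
  case False
  have "0 < z" using assms by (metis mult_pos_pos order_less_le_trans)
  with False have "(t * c) powr e \<le> z powr e"
    using assms by (intro powr_mono2') auto
  then show ?thesis using assms by (simp add: powr_mult min_mult_distrib_left mult.commute)
qed

lemma powr_le_max_scaled:
  fixes c s t z e :: real
  assumes "0 < c" "0 < s" "s * c \<le> z" "z \<le> t * c"
  shows "z powr e \<le> c powr e * max (s powr e) (t powr e)"
proof (cases "e \<ge> 0")
  case True
  then have "z powr e \<le> (t * c) powr e"
    using assms by (intro powr_mono2) (auto intro: order_trans[OF _ assms(3)])
  then show ?thesis using assms by (simp add: powr_mult max_mult_distrib_left mult.commute)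
next
  case False
  then have "z powr e \<le> (s * c) powr e" using assms by (intro powr_mono2') auto
  then show ?thesis using assms by (simp add: powr_mult max_mult_distrib_left mult.commute)
qed

lemma ex_powr_gt:
  fixes M D :: real
  assumes "D \<noteq> 0"
  shows "\<exists>c>0. M < c powr D"
proof (intro exI conjI)
  show "0 < (\<bar>M\<bar> + 1) powr (1/D)" by simp
  show "M < ((\<bar>M\<bar> + 1) powr (1/D)) powr D"
    using assms by (simp add: powr_powr)
qed

lemma ex_linear_gt_powr:
  fixes k C r :: real
  assumes "0 < k" "r < 1"
  shows "\<exists>T>0. C * T powr r < k * T"
proof -
  obtain T where T: "T > 0" "\<bar>C\<bar> / k < T powr (1 - r)"
    using ex_powr_gt[of "1 - r" "\<bar>C\<bar> / k"] assms by auto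
  have "C * T powr r \<le> \<bar>C\<bar> * T powr r" by (simp add: mult_right_mono)
  also have "\<dots> < k * T powr (1 - r) * T powr r"
    using T assms by (simp add: pos_divide_less_eq mult.commute)
  also have "\<dots> = k * T" using T by (simp flip: powr_add)
  finally show ?thesis using T by blast
qed

lemma conjugate_exponent_gt_one:
  fixes p q :: real
  assumes "1 < p" "1/p + 1/q = 1"
  shows "1 < q"
proof -
  have "1/q = 1 - 1/p" using assms(2) by simp
  moreover have "0 < 1 - 1/p" "1 - 1/p < 1" using assms(1) by auto
  ultimately have "0 < 1/q" "1/q < 1" by auto
  then show ?thesis by (simp add: divide_less_eq)
qed

lemma Youngs_inequality_scaled:
  fixes p q a b g h :: real
  assumes "p > 1" "q > 1" "1/p + 1/q = 1" "a > 0" "b > 0" "g \<ge> 0" "h \<ge> 0"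
  shows "g * h \<le> a * b * ((g / a) powr q / q + (h / b) powr p / p)"
proof -
  have "1/q + 1/p = 1" using assms(3) by simp
  then have "(g / a) * (h / b) \<le> (g / a) powr q / q + (h / b) powr p / p"
    by (rule Youngs_inequality[OF assms(2,1)]) (use assms in auto)
  moreover have "g * h = a * b * ((g / a) * (h / b))" using assms(4,5) by simp
  ultimately show ?thesis using assms(4,5) by (metis mult_left_mono mult_pos_pos less_eq_real_def)
qed

lemma nn_integral_Holder:
  fixes g h :: "'a \<Rightarrow> real" and p q A B :: real
  assumes p: "p > 1" and pq: "1/p + 1/q = 1"
    and [measurable]: "g \<in> borel_measurable M" "h \<in> borel_measurable M"
    and nonneg: "\<And>x. g x \<ge> 0" "\<And>x. h x \<ge> 0"
    and A: "A > 0" "(\<integral>\<^sup>+x. ennreal (g x powr q) \<partial>M) \<le> ennreal A"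
    and B: "B \<ge> 0" "(\<integral>\<^sup>+x. ennreal (h x powr p) \<partial>M) \<le> ennreal B"
  shows "(\<integral>\<^sup>+x. ennreal (g x * h x) \<partial>M) \<le> ennreal (A powr (1/q) * B powr (1/p))"
proof -
  have "q > 1" using conjugate_exponent_gt_one[OF p pq] .
  define a where "a = A powr (1/q)"
  have "a > 0" and a_q: "a powr q = A" unfolding a_def using A \<open>q > 1\<close> by (simp_all add: powr_powr)
  \<comment> \<open>Young's inequality with a free scale \<open>b\<close>, integrated. For \<open>B > 0\<close> take \<open>b = B powr (1/p)\<close>; for \<open>B = 0\<close> let \<open>b \<rightarrow> 0\<close>.\<close>
  have Young_integrated: "(\<integral>\<^sup>+x. ennreal (g x * h x) \<partial>M) \<le> ennreal (a * b / q + a * b * B / (b powr p * p))"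
    if "b > 0" for b
  proof -
    define c1 where "c1 = a * b / (A * q)"
    define c2 where "c2 = a * b / (b powr p * p)"
    have "c1 \<ge> 0" "c2 \<ge> 0" unfolding c1_def c2_def using \<open>a > 0\<close> \<open>b > 0\<close> A \<open>q > 1\<close> p by auto
    have "(\<integral>\<^sup>+x. ennreal (g x * h x) \<partial>M)
        \<le> (\<integral>\<^sup>+x. ennreal c1 * ennreal (g x powr q) + ennreal c2 * ennreal (h x powr p) \<partial>M)"
    proof (rule nn_integral_mono)
      fix x
      have "g x * h x \<le> a * b * ((g x / a) powr q / q + (h x / b) powr p / p)"
        using Youngs_inequality_scaled[OF p \<open>q > 1\<close> pq \<open>a > 0\<close> \<open>b > 0\<close> nonneg(1,2)] .
      also have "\<dots> = c1 * g x powr q + c2 * h x powr p"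
        unfolding c1_def c2_def using nonneg \<open>a > 0\<close> \<open>b > 0\<close>
        by (simp add: powr_divide a_q field_simps)
      finally show "ennreal (g x * h x) \<le> ennreal c1 * ennreal (g x powr q) + ennreal c2 * ennreal (h x powr p)"
        using \<open>c1 \<ge> 0\<close> \<open>c2 \<ge> 0\<close>
        by (simp add: ennreal_mult[symmetric] ennreal_plus[symmetric] ennreal_leI del: ennreal_plus)
    qed
    also have "\<dots> = ennreal c1 * (\<integral>\<^sup>+x. ennreal (g x powr q) \<partial>M) + ennreal c2 * (\<integral>\<^sup>+x. ennreal (h x powr p) \<partial>M)"
      by (simp add: nn_integral_add nn_integral_cmult)
    also have "\<dots> \<le> ennreal c1 * ennreal A + ennreal c2 * ennreal B"
      using A B by (intro add_mono mult_left_mono) auto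
    also have "\<dots> = ennreal (c1 * A + c2 * B)"
      using \<open>c1 \<ge> 0\<close> \<open>c2 \<ge> 0\<close> A B
      by (simp add: ennreal_mult[symmetric] ennreal_plus[symmetric] del: ennreal_plus)
    also have "c1 * A = a * b / q" unfolding c1_def using A by simp
    finally show ?thesis unfolding c2_def by (simp add: mult.assoc)
  qed
  show ?thesis
  proof (cases "B > 0")
    case True
    define b where "b = B powr (1/p)"
    have "b > 0" "b powr p = B" unfolding b_def using True p by (simp_all add: powr_powr)
    then have "a * b / q + a * b * B / (b powr p * p) = a * b * (1/p + 1/q)"
      using True by (simp add: field_simps)
    then show ?thesis using Young_integrated[OF \<open>b > 0\<close>] pq unfolding a_def b_def by simp
  next
    case False
    then have "B = 0" using B by simp
    have "(\<integral>\<^sup>+x. ennreal (g x * h x) \<partial>M) \<le> 0 + ennreal e" if "e > 0" for e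
      using Young_integrated[of "e * q / a"] that \<open>a > 0\<close> \<open>q > 1\<close> \<open>B = 0\<close> by simp
    then have "(\<integral>\<^sup>+x. ennreal (g x * h x) \<partial>M) \<le> 0" by (rule ennreal_le_epsilon) simp
    then show ?thesis using \<open>B = 0\<close> p by simp
  qed
qed

lemma AE_lborel_ex_in_Icc:
  fixes u v :: real
  assumes "AE x in lborel. P x" "u < v"
  shows "\<exists>x\<in>{u..v}. P x"
proof (rule ccontr)
  assume "\<not> ?thesis"
  then have "AE x in lborel. x \<notin> {u..v}"
    using assms(1) by (auto elim: AE_mp)
  then have "emeasure lborel {u..v} = 0"
    by (subst (asm) AE_iff_measurable[of "{u..v}"]) auto
  then show False using assms(2) by simp
qed

lemma nn_integral_Ioi_dilation:
  fixes F :: "real \<Rightarrow> ennreal" and y :: real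
  assumes [measurable]: "F \<in> borel_measurable borel" and "y > 0"
  shows "(\<integral>\<^sup>+x\<in>{0<..}. F x \<partial>lborel) = ennreal y * (\<integral>\<^sup>+t\<in>{0<..}. F (y * t) \<partial>lborel)"
proof -
  have "(\<integral>\<^sup>+x\<in>{0<..}. F x \<partial>lborel) = ennreal y * (\<integral>\<^sup>+t. F (y * t) * indicator {0<..} (y * t) \<partial>lborel)"
    using nn_integral_real_affine[of "\<lambda>x. F x * indicator {0<..} x" y 0] \<open>y > 0\<close> by simp
  also have "(\<lambda>t. indicator {0<..} (y * t) :: ennreal) = indicator {0<..}"
    using \<open>y > 0\<close> by (auto simp: indicator_def zero_less_mult_iff)
  finally show ?thesis .
qed

lemma nn_integral_powr_one_plus_finite:
  fixes a b :: real
  assumes "a > -1" "a + b < -1"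
  shows "(\<integral>\<^sup>+t\<in>{0<..}. ennreal (t powr a * (1 + t) powr b) \<partial>lborel) < \<infinity>"
proof -
  define M where "M = max 1 (2 powr b)"
  have "M > 0" unfolding M_def by simp
  have "ennreal (t powr a * (1 + t) powr b) * indicator {0<..} t
      \<le> ennreal (M * t powr a) * indicator {0..1} t + ennreal (M * t powr (a + b)) * indicator {1..} t"
    for t :: real
  proof (cases "t \<le> 1")
    case True
    have "(1 + t) powr b \<le> 1 powr b * M" if "t > 0"
      using powr_le_max_scaled[of 1 1 "1 + t" 2 b] True that unfolding M_def by simp
    then have "ennreal (t powr a * (1 + t) powr b) * indicator {0<..} t
        \<le> ennreal (M * t powr a) * indicator {0..1} t"
      using True by (auto simp: indicator_def mult.commute intro!: ennreal_leI mult_left_mono)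
    then show ?thesis by (rule order_trans) (simp add: add_increasing2)
  next
    case False
    have "(1 + t) powr b \<le> t powr b * M"
      using powr_le_max_scaled[of t 1 "1 + t" 2 b] False unfolding M_def by simp
    then have "t powr a * (1 + t) powr b \<le> M * t powr (a + b)"
      using False by (simp add: powr_add mult_left_mono mult_ac)
    then have "ennreal (t powr a * (1 + t) powr b) * indicator {0<..} t
        \<le> ennreal (M * t powr (a + b)) * indicator {1..} t"
      using False by (auto simp: indicator_def intro!: ennreal_leI)
    then show ?thesis by (rule order_trans) (simp add: add_increasing)
  qed
  then have "(\<integral>\<^sup>+t\<in>{0<..}. ennreal (t powr a * (1 + t) powr b) \<partial>lborel)
      \<le> (\<integral>\<^sup>+t. ennreal (M * t powr a) * indicator {0..1} t \<partial>lborel)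
        + (\<integral>\<^sup>+t. ennreal (M * t powr (a + b)) * indicator {1..} t \<partial>lborel)"
    by (subst nn_integral_add[symmetric]) (auto intro!: nn_integral_mono)
  also have "\<dots> = ennreal (M * (1 powr (a + 1) / (a + 1)))
      + ennreal (M * (- (1 powr (a + b + 1)) / (a + b + 1)))"
    using assms \<open>M > 0\<close>
    by (intro arg_cong2[where f = "(+)"] nn_integral_has_integral_lebesgue' has_integral_mult_right
        has_integral_powr_from_0 has_integral_powr_to_inf) auto
  also have "\<dots> < \<infinity>" by simp
  finally show ?thesis .
qed

lemma Lp_alpha_test_function:
  fixes p alpha a b :: real
  assumes p: "1 < p" and ab: "0 < a" "a < b"
  defines "f \<equiv> \<lambda>x. indicator {a..b} x * x powr (-(alpha + 1) / p)"
  shows "in_Lp_alpha p alpha f" "Lp_alpha_norm p alpha f = ln (b / a) powr (1 / p)"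
proof -
  have "ennreal (\<bar>f x\<bar> powr p * x powr alpha) * indicator {0<..} x
      = ennreal (1 / x) * indicator {a..b} x" for x
  proof (cases "x \<in> {a..b}")
    case True
    then have x: "x > 0" using ab by auto
    have "\<bar>f x\<bar> powr p * x powr alpha = x powr (-(alpha + 1) / p * p + alpha)"
      using True x by (simp add: f_def powr_powr powr_add)
    also have "\<dots> = 1 / x" using p x by (simp add: powr_minus_divide)
    finally show ?thesis using True x by simp
  qed (use p in \<open>simp add: f_def\<close>)
  then have "wpint p alpha f = (\<integral>\<^sup>+x. ennreal (1 / x) * indicator {a..b} x \<partial>lborel)"
    unfolding wpint_def by simp
  also have "\<dots> = ennreal (ln b - ln a)"
    using ab by (intro nn_integral_FTC_Icc) (auto intro!: derivative_eq_intros)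
  finally have wpint_f: "wpint p alpha f = ennreal (ln (b / a))"
    using ab by (simp add: ln_div)
  have "set_borel_measurable lborel {0<..} f"
    unfolding set_borel_measurable_def f_def by measurable
  then show "in_Lp_alpha p alpha f" unfolding in_Lp_alpha_def wpint_f by simp
  show "Lp_alpha_norm p alpha f = ln (b / a) powr (1 / p)"
    unfolding Lp_alpha_norm_def wpint_f using ab by simp
qed

definition box_estimate :: "real \<Rightarrow> real \<Rightarrow> real \<Rightarrow> real \<Rightarrow> real \<Rightarrow> bool" where
  "box_estimate p e nu lam C \<longleftrightarrow>
    (\<forall>a b u v m. 0 < a \<longrightarrow> a < b \<longrightarrow> 0 < u \<longrightarrow> u < v \<longrightarrow>
      (\<forall>x\<in>{a..b}. \<forall>y\<in>{u..v}. m \<le> x powr e * y powr nu * (x + y) powr (-lam)) \<longrightarrow>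
      m * ln (b / a) \<le> C * ln (b / a) powr (1 / p))"

lemma box_estimateD:
  assumes "box_estimate p e nu lam C" "0 < a" "a < b" "0 < u" "u < v"
    and "\<And>x y. x \<in> {a..b} \<Longrightarrow> y \<in> {u..v} \<Longrightarrow> m \<le> x powr e * y powr nu * (x + y) powr (-lam)"
  shows "m * ln (b / a) \<le> C * ln (b / a) powr (1 / p)"
  using assms unfolding box_estimate_def by blast

lemma Hop_test_function_ge:
  fixes p alpha lam mu nu a b m y :: real
  assumes p: "1 < p" and ab: "0 < a" "a < b"
  defines "f \<equiv> \<lambda>x. indicator {a..b} x * x powr (-(alpha + 1) / p)"
  assumes integrable: "set_integrable lborel {0<..} (\<lambda>x. hkernel lam mu nu x y * f x)"
    and m: "\<And>x. x \<in> {a..b} \<Longrightarrow>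
      m \<le> x powr (mu + 1 - (alpha + 1) / p) * y powr nu * (x + y) powr (-lam)"
  shows "m * ln (b / a) \<le> Hop lam mu nu f y"
proof -
  have "continuous_on {a..b} (\<lambda>x. m / x)"
    using ab by (intro continuous_intros) auto
  have "(LINT x:{a..b}|lborel. m / x) = m * ln b - m * ln a"
    unfolding set_lebesgue_integral_def
  proof (rule integral_FTC_atLeastAtMost)
    fix x assume "a \<le> x" "x \<le> b"
    then show "((\<lambda>x. m * ln x) has_vector_derivative m / x) (at x within {a..b})"
      using ab by (auto intro!: derivative_eq_intros
        simp flip: has_real_derivative_iff_has_vector_derivative)
  qed (use ab \<open>continuous_on {a..b} (\<lambda>x. m / x)\<close> in auto)
  then have "m * ln (b / a) = (LINT x:{a..b}|lborel. m / x)"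
    using ab by (simp add: ln_div algebra_simps)
  also have "\<dots> \<le> Hop lam mu nu f y"
  proof -
    have "m / x \<le> hkernel lam mu nu x y * f x" if "x \<in> {a..b}" for x
    proof -
      have "x > 0" using that ab by auto
      have "mu + 1 - (alpha + 1) / p = mu + (-(alpha + 1) / p) + 1" using p by (simp add: field_simps)
      then have "x powr (mu + 1 - (alpha + 1) / p) = x powr mu * x powr (-(alpha + 1) / p) * x"
        using \<open>x > 0\<close> by (simp only: powr_add powr_one)
      then have "hkernel lam mu nu x y * f x
          = x powr (mu + 1 - (alpha + 1) / p) * y powr nu * (x + y) powr (-lam) / x"
        using that \<open>x > 0\<close> by (simp add: f_def hkernel_def powr_minus_divide)
      then show ?thesis using m[OF that] \<open>x > 0\<close> by (simp add: divide_right_mono)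
    qed
    then show ?thesis
      unfolding Hop_def set_lebesgue_integral_def
      using ab integrable borel_integrable_atLeastAtMost'[OF \<open>continuous_on {a..b} (\<lambda>x. m / x)\<close>]
      by (intro integral_mono) (auto simp: set_integrable_def f_def indicator_def)
  qed
  finally show ?thesis .
qed

lemma H_bounded_imp_box_estimate:
  fixes p alpha lam mu nu :: real
  assumes p: "1 < p" and H: "H_bounded p alpha lam mu nu"
  obtains C where "box_estimate p (mu + 1 - (alpha + 1) / p) nu lam C"
proof -
  from H obtain C where C: "\<And>f. in_Lp_alpha p alpha f \<Longrightarrow>
      (\<forall>y>0. set_integrable lborel {0<..} (\<lambda>x. hkernel lam mu nu x y * f x)) \<and>
      (AE y in lborel. y > 0 \<longrightarrow> \<bar>Hop lam mu nu f y\<bar> \<le> C * Lp_alpha_norm p alpha f)"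
    unfolding H_bounded_def by blast
  have "m * ln (b / a) \<le> C * ln (b / a) powr (1 / p)"
    if ab: "0 < a" "a < b" and uv: "0 < u" "u < v"
      and m: "\<forall>x\<in>{a..b}. \<forall>y\<in>{u..v}.
        m \<le> x powr (mu + 1 - (alpha + 1) / p) * y powr nu * (x + y) powr (-lam)"
    for a b u v m
  proof -
    define f where "f \<equiv> \<lambda>x. indicator {a..b} x * x powr (-(alpha + 1) / p)"
    have f: "in_Lp_alpha p alpha f" "Lp_alpha_norm p alpha f = ln (b / a) powr (1 / p)"
      using Lp_alpha_test_function[OF p ab] unfolding f_def by auto
    obtain y where y: "y \<in> {u..v}" "\<bar>Hop lam mu nu f y\<bar> \<le> C * ln (b / a) powr (1 / p)"
      using AE_lborel_ex_in_Icc[OF conjunct2[OF C[OF f(1)]] \<open>u < v\<close>] uv f(2) by auto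
    have "m * ln (b / a) \<le> Hop lam mu nu f y"
      unfolding f_def using C[OF f(1)] y uv m
      by (intro Hop_test_function_ge[OF p ab]) (auto simp: f_def)
    then show ?thesis using y(2) by simp
  qed
  then show ?thesis using that unfolding box_estimate_def by blast
qed

lemma box_estimate_imp_homogeneity:
  fixes p e nu lam C :: real
  assumes "1 < p" and "box_estimate p e nu lam C"
  shows "e + nu = lam"
proof (rule ccontr)
  define D where "D = e + nu - lam"
  assume "e + nu \<noteq> lam"
  then have "D \<noteq> 0" unfolding D_def by simp
  define k where "k = min 1 (2 powr e) * min 1 (2 powr nu) * min (2 powr (-lam)) (4 powr (-lam))"
  have "k > 0" unfolding k_def by simp
  \<comment> \<open>On the box \<open>[c, 2c]\<^sup>2\<close> the integrand is of exact order \<open>c powr D\<close>, while the box estimate does not see \<open>c\<close>.\<close>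
  have bound: "(k * c powr D) * ln 2 \<le> C * ln 2 powr (1 / p)" if "c > 0" for c
  proof -
    have "(k * c powr D) * ln (2 * c / c) \<le> C * ln (2 * c / c) powr (1 / p)"
    proof (rule box_estimateD[OF assms(2)])
      fix x y :: real assume xy: "x \<in> {c..2 * c}" "y \<in> {c..2 * c}"
      have "c powr D = c powr e * c powr nu * c powr (-lam)"
        unfolding D_def by (simp flip: powr_add)
      then have "k * c powr D = (c powr e * min 1 (2 powr e)) * (c powr nu * min 1 (2 powr nu))
          * (c powr (-lam) * min (2 powr (-lam)) (4 powr (-lam)))"
        unfolding k_def by (simp only: ac_simps)
      also have "\<dots> \<le> x powr e * y powr nu * (x + y) powr (-lam)"
        using xy \<open>c > 0\<close> powr_ge_min_scaled[of c 1 x 2 e] powr_ge_min_scaled[of c 1 y 2 nu]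
        by (intro mult_mono powr_ge_min_scaled) auto
      finally show "k * c powr D \<le> x powr e * y powr nu * (x + y) powr (-lam)" .
    qed (use \<open>c > 0\<close> in auto)
    then show ?thesis using \<open>c > 0\<close> by simp
  qed
  obtain c where c: "c > 0" "C * ln 2 powr (1 / p) / (k * ln 2) < c powr D"
    using ex_powr_gt[OF \<open>D \<noteq> 0\<close>] by blast
  have "k * ln 2 > 0" using \<open>k > 0\<close> by simp
  then have "c powr D \<le> C * ln 2 powr (1 / p) / (k * ln 2)"
    using bound[OF c(1)] by (simp add: pos_le_divide_eq mult_ac)
  then show False using c(2) by simp
qed

lemma box_estimate_imp_decay_at_infinity:
  fixes p e nu lam C :: real
  assumes "1 < p" and "box_estimate p e nu lam C"
  shows "e < lam"
proof (rule ccontr)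
  assume "\<not> e < lam"
  define k where "k = min ((1/2) powr nu) (1 powr nu) * min (1 powr (-lam)) (2 powr (-lam))"
  have "k > 0" unfolding k_def by simp
  have bound: "k * T \<le> C * T powr (1 / p)" if "T > 0" for T
  proof -
    have "k * ln (exp T / 1) \<le> C * ln (exp T / 1) powr (1 / p)"
    proof (rule box_estimateD[OF assms(2)])
      fix x y :: real assume xy: "x \<in> {1..exp T}" "y \<in> {1/2..1}"
      have "k \<le> x powr (e - lam) * k"
        using xy \<open>\<not> e < lam\<close> \<open>k > 0\<close> ge_one_powr_ge_zero by simp
      also have "\<dots> = x powr e * (1 powr nu * min ((1/2) powr nu) (1 powr nu))
          * (x powr (-lam) * min (1 powr (-lam)) (2 powr (-lam)))"
        unfolding k_def using xy by (simp add: powr_diff powr_minus_divide)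
      also have "\<dots> \<le> x powr e * y powr nu * (x + y) powr (-lam)"
        using xy by (intro mult_mono mult_left_mono powr_ge_min_scaled) auto
      finally show "k \<le> x powr e * y powr nu * (x + y) powr (-lam)" .
    qed (use \<open>T > 0\<close> in auto)
    then show ?thesis by simp
  qed
  obtain T where "T > 0" "C * T powr (1 / p) < k * T"
    using ex_linear_gt_powr[OF \<open>k > 0\<close>, of "1 / p" C] assms(1) by auto
  then show False using bound by fastforce
qed

lemma box_estimate_imp_integrability_at_zero:
  fixes p e nu lam C :: real
  assumes "1 < p" and "box_estimate p e nu lam C"
  shows "0 < e"
proof (rule ccontr)
  assume "\<not> 0 < e"
  define k where "k = min (1 powr nu) (2 powr nu) * min (1 powr (-lam)) (3 powr (-lam))"
  have "k > 0" unfolding k_def by simp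
  have bound: "k * T \<le> C * T powr (1 / p)" if "T > 0" for T
  proof -
    have "k * ln (1 / exp (-T)) \<le> C * ln (1 / exp (-T)) powr (1 / p)"
    proof (rule box_estimateD[OF assms(2)])
      fix x y :: real assume xy: "x \<in> {exp (-T)..1}" "y \<in> {1..2}"
      have "x > 0" using xy by (auto intro: less_le_trans[OF exp_gt_zero])
      then have "1 \<le> x powr e" using xy \<open>\<not> 0 < e\<close> powr_mono2'[of e x 1] by auto
      then have "k \<le> x powr e * (1 powr nu * min (1 powr nu) (2 powr nu))
          * (1 powr (-lam) * min (1 powr (-lam)) (3 powr (-lam)))"
        using \<open>k > 0\<close> unfolding k_def by simp
      also have "\<dots> \<le> x powr e * y powr nu * (x + y) powr (-lam)"
        using xy \<open>x > 0\<close> by (intro mult_mono mult_left_mono powr_ge_min_scaled) auto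
      finally show "k \<le> x powr e * y powr nu * (x + y) powr (-lam)" .
    qed (use \<open>T > 0\<close> in auto)
    then show ?thesis by (simp add: ln_div)
  qed
  obtain T where "T > 0" "C * T powr (1 / p) < k * T"
    using ex_linear_gt_powr[OF \<open>k > 0\<close>, of "1 / p" C] assms(1) by auto
  then show False using bound by fastforce
qed

lemma H_bounded_imp_exponent_conditions:
  fixes p alpha lam mu nu :: real
  assumes p: "1 < p" and H: "H_bounded p alpha lam mu nu"
  shows "lam = mu + nu + 1 - (alpha + 1) / p \<and> 0 < nu \<and> nu < lam"
proof -
  obtain C where C: "box_estimate p (mu + 1 - (alpha + 1) / p) nu lam C"
    using H_bounded_imp_box_estimate[OF p H] .
  show ?thesis
    using box_estimate_imp_homogeneity[OF p C] box_estimate_imp_decay_at_infinity[OF p C]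
      box_estimate_imp_integrability_at_zero[OF p C]
    by linarith
qed

lemma hkernel_dilation:
  fixes lam mu nu s y t :: real
  assumes "y > 0" "t > 0"
  shows "hkernel lam mu nu (y * t) y * (y * t) powr s
    = y powr (mu + nu - lam + s) * (t powr (mu + s) * (1 + t) powr (-lam))"
proof -
  have "y * t + y = y * (1 + t)" by (simp add: algebra_simps)
  then have "(y * t + y) powr lam = y powr lam * (1 + t) powr lam"
    using assms by (simp add: powr_mult)
  then show ?thesis using assms
    by (simp add: hkernel_def powr_mult powr_add powr_diff powr_minus_divide field_simps)
qed

lemma weighted_kernel_Lq_dilation:
  fixes lam mu nu q s y :: real
  assumes "y > 0" and exponent: "(mu + nu - lam + s) * q = -1"
  shows "(\<integral>\<^sup>+x\<in>{0<..}. ennreal ((hkernel lam mu nu x y * x powr s) powr q) \<partial>lborel)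
    = (\<integral>\<^sup>+t\<in>{0<..}. ennreal (t powr ((mu + s) * q) * (1 + t) powr (-lam * q)) \<partial>lborel)"
proof -
  have pointwise: "ennreal y * ennreal ((hkernel lam mu nu (y * t) y * (y * t) powr s) powr q)
      = ennreal (t powr ((mu + s) * q) * (1 + t) powr (-lam * q))" if "t > 0" for t
  proof -
    have "(hkernel lam mu nu (y * t) y * (y * t) powr s) powr q
        = y powr ((mu + nu - lam + s) * q) * (t powr ((mu + s) * q) * (1 + t) powr (-lam * q))"
      unfolding hkernel_dilation[OF \<open>y > 0\<close> \<open>t > 0\<close>] using \<open>y > 0\<close> \<open>t > 0\<close>
      by (simp add: powr_mult powr_powr)
    then show ?thesis
      unfolding exponent using \<open>y > 0\<close> by (simp add: ennreal_mult[symmetric] powr_minus_divide)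
  qed
  have "(\<integral>\<^sup>+x\<in>{0<..}. ennreal ((hkernel lam mu nu x y * x powr s) powr q) \<partial>lborel)
      = ennreal y * (\<integral>\<^sup>+t\<in>{0<..}. ennreal ((hkernel lam mu nu (y * t) y * (y * t) powr s) powr q) \<partial>lborel)"
    using \<open>y > 0\<close> by (intro nn_integral_Ioi_dilation) (simp_all add: hkernel_def)
  also have "\<dots> = (\<integral>\<^sup>+t\<in>{0<..}. ennreal y * ennreal ((hkernel lam mu nu (y * t) y * (y * t) powr s) powr q) \<partial>lborel)"
    by (simp add: nn_integral_cmult[symmetric] hkernel_def mult.assoc)
  also have "\<dots> = (\<integral>\<^sup>+t\<in>{0<..}. ennreal (t powr ((mu + s) * q) * (1 + t) powr (-lam * q)) \<partial>lborel)"
    using pointwise by (intro nn_integral_cong) (simp split: split_indicator)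
  finally show ?thesis .
qed

lemma weighted_kernel_Lq_bound:
  fixes p q alpha lam mu nu :: real
  assumes p: "1 < p" and pq: "1/p + 1/q = 1"
    and hom: "lam = mu + nu + 1 - (alpha + 1) / p" and "0 < nu" "nu < lam"
  obtains A where "A > 0" "\<And>y. y > 0 \<Longrightarrow>
    (\<integral>\<^sup>+x\<in>{0<..}. ennreal ((hkernel lam mu nu x y * x powr (-alpha/p)) powr q) \<partial>lborel) \<le> ennreal A"
proof -
  have "q > 0" using conjugate_exponent_gt_one[OF p pq] by simp
  define s where "s = -alpha/p"
  have "(alpha + 1) / p = alpha / p + 1 / p" by (simp add: add_divide_distrib)
  then have "mu + nu - lam + s = - 1/q"
    using pq unfolding hom s_def by simp
  then have exponent: "(mu + nu - lam + s) * q = -1" using \<open>q > 0\<close> by simp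
  define I where "I = (\<integral>\<^sup>+t\<in>{0<..}. ennreal (t powr ((mu + s) * q) * (1 + t) powr (-lam * q)) \<partial>lborel)"
  have "I < \<infinity>" unfolding I_def
  proof (rule nn_integral_powr_one_plus_finite)
    have "(lam - nu) * q > 0" "nu * q > 0" using \<open>0 < nu\<close> \<open>nu < lam\<close> \<open>q > 0\<close> by simp_all
    moreover have "(mu + s) * q = (mu + nu - lam + s) * q + (lam - nu) * q"
      and "(mu + s) * q + -lam * q = (mu + nu - lam + s) * q - nu * q"
      by (simp_all add: algebra_simps)
    ultimately show "(mu + s) * q > -1" "(mu + s) * q + -lam * q < -1"
      unfolding exponent by simp_all
  qed
  have "I = ennreal (enn2real I)" using \<open>I < \<infinity>\<close> by (simp add: less_top)
  also have "\<dots> \<le> ennreal (enn2real I + 1)" by (rule ennreal_leI) simp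
  finally have "I \<le> ennreal (enn2real I + 1)" .
  moreover have "enn2real I + 1 > 0" by (simp add: add_nonneg_pos)
  ultimately show ?thesis
    using that weighted_kernel_Lq_dilation[OF _ exponent] unfolding I_def s_def by simp
qed

lemma Hop_integrand_bound:
  fixes p q alpha lam mu nu A y :: real
  assumes p: "1 < p" and pq: "1/p + 1/q = 1" and f: "in_Lp_alpha p alpha f" and "A > 0"
    and kernel: "(\<integral>\<^sup>+x\<in>{0<..}. ennreal ((hkernel lam mu nu x y * x powr (-alpha/p)) powr q) \<partial>lborel)
      \<le> ennreal A"
  shows "(\<integral>\<^sup>+x\<in>{0<..}. ennreal \<bar>hkernel lam mu nu x y * f x\<bar> \<partial>lborel)
    \<le> ennreal (A powr (1/q) * Lp_alpha_norm p alpha f)"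
proof -
  have "q > 0" using conjugate_exponent_gt_one[OF p pq] by simp
  define fz where "fz x = indicator {0<..} x *\<^sub>R f x" for x
  have [measurable]: "fz \<in> borel_measurable lborel"
    using f unfolding in_Lp_alpha_def set_borel_measurable_def fz_def by simp
  define g where "g x = indicator {0<..} x * (hkernel lam mu nu x y * x powr (-alpha/p))" for x
  define h where "h x = \<bar>fz x\<bar> * x powr (alpha/p)" for x
  have "(\<integral>\<^sup>+x. ennreal (g x powr q) \<partial>lborel)
      = (\<integral>\<^sup>+x\<in>{0<..}. ennreal ((hkernel lam mu nu x y * x powr (-alpha/p)) powr q) \<partial>lborel)"
    by (intro nn_integral_cong) (simp add: g_def split: split_indicator)
  then have "(\<integral>\<^sup>+x. ennreal (g x powr q) \<partial>lborel) \<le> ennreal A" using kernel by simp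
  moreover define B where "B = enn2real (wpint p alpha f)"
  have "h x powr p = \<bar>f x\<bar> powr p * x powr alpha" if "x > 0" for x
  proof -
    have "h x powr p = \<bar>f x\<bar> powr p * x powr (alpha / p * p)"
      using that by (simp add: h_def fz_def powr_mult powr_powr)
    then show ?thesis using p by simp
  qed
  then have "(\<integral>\<^sup>+x. ennreal (h x powr p) \<partial>lborel) = wpint p alpha f"
    unfolding wpint_def using p
    by (intro nn_integral_cong) (simp add: h_def fz_def split: split_indicator)
  then have "(\<integral>\<^sup>+x. ennreal (h x powr p) \<partial>lborel) \<le> ennreal B"
    using f unfolding B_def in_Lp_alpha_def by (simp add: less_top)
  ultimately have "(\<integral>\<^sup>+x. ennreal (g x * h x) \<partial>lborel) \<le> ennreal (A powr (1/q) * B powr (1/p))"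
    using \<open>A > 0\<close> by (intro nn_integral_Holder[OF p pq])
      (simp_all add: g_def h_def hkernel_def B_def)
  moreover have "ennreal \<bar>hkernel lam mu nu x y * f x\<bar> * indicator {0<..} x = ennreal (g x * h x)" for x
  proof (cases "x > 0")
    case True
    then have "x powr (-alpha/p) * x powr (alpha/p) = 1" by (simp flip: powr_add)
    then have "g x * h x = hkernel lam mu nu x y * \<bar>f x\<bar>"
      using True by (simp add: g_def h_def fz_def mult_ac)
    then show ?thesis using True by (simp add: abs_mult hkernel_def)
  qed (simp add: g_def)
  ultimately show ?thesis unfolding Lp_alpha_norm_def B_def by simp
qed

lemma Hop_measurable:
  assumes "set_borel_measurable lborel {0<..} f"
  shows "set_borel_measurable lborel {0<..} (Hop lam mu nu f)"
proof -
  define fz where "fz x = indicator {0<..} x *\<^sub>R f x" for x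
  have fz [measurable]: "fz \<in> borel_measurable lborel"
    using assms unfolding set_borel_measurable_def fz_def by simp
  have "Hop lam mu nu f = (\<lambda>y. \<integral>x. hkernel lam mu nu x y * fz x \<partial>lborel)"
    unfolding Hop_def set_lebesgue_integral_def fz_def
    by (intro ext Bochner_Integration.integral_cong) (auto split: split_indicator)
  moreover have "(\<lambda>y. \<integral>x. hkernel lam mu nu x y * fz x \<partial>lborel) \<in> borel_measurable lborel"
  proof (rule lborel.borel_measurable_lebesgue_integral)
    have [measurable]: "(\<lambda>z. fz (snd z)) \<in> borel_measurable (lborel \<Otimes>\<^sub>M lborel)"
      by (rule measurable_compose[OF measurable_snd fz])
    show "case_prod (\<lambda>y x. hkernel lam mu nu x y * fz x) \<in> borel_measurable (lborel \<Otimes>\<^sub>M lborel)"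
      unfolding hkernel_def case_prod_beta by measurable
  qed
  ultimately have [measurable]: "Hop lam mu nu f \<in> borel_measurable lborel" by simp
  show ?thesis unfolding set_borel_measurable_def by measurable
qed

lemma H_boundedI:
  fixes p alpha lam mu nu :: real
  assumes p: "1 < p" and hom: "lam = mu + nu + 1 - (alpha + 1) / p" and "0 < nu" "nu < lam"
  shows "H_bounded p alpha lam mu nu"
proof -
  define q where "q = p / (p - 1)"
  have pq: "1/p + 1/q = 1" using p unfolding q_def by (simp add: field_simps)
  obtain A where "A > 0" and kernel: "\<And>y. y > 0 \<Longrightarrow>
      (\<integral>\<^sup>+x\<in>{0<..}. ennreal ((hkernel lam mu nu x y * x powr (-alpha/p)) powr q) \<partial>lborel) \<le> ennreal A"
    using weighted_kernel_Lq_bound[OF p pq hom \<open>0 < nu\<close> \<open>nu < lam\<close>] by blast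
  show ?thesis unfolding H_bounded_def
  proof (intro exI[of _ "A powr (1/q)"] allI impI conjI)
    fix f assume f: "in_Lp_alpha p alpha f"
    then show "set_borel_measurable lborel {0<..} (Hop lam mu nu f)"
      unfolding in_Lp_alpha_def by (intro Hop_measurable) simp
    have bound: "(\<integral>\<^sup>+x\<in>{0<..}. ennreal \<bar>hkernel lam mu nu x y * f x\<bar> \<partial>lborel)
        \<le> ennreal (A powr (1/q) * Lp_alpha_norm p alpha f)" if "y > 0" for y
      by (rule Hop_integrand_bound[OF p pq f \<open>A > 0\<close> kernel[OF that]])
    have [measurable]: "(\<lambda>x. indicator {0<..} x *\<^sub>R f x) \<in> borel_measurable lborel"
      using f unfolding in_Lp_alpha_def set_borel_measurable_def by simp
    have measurable: "set_borel_measurable lborel {0<..} (\<lambda>x. hkernel lam mu nu x y * f x)" for y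
    proof -
      have "(\<lambda>x. hkernel lam mu nu x y * (indicator {0<..} x *\<^sub>R f x)) \<in> borel_measurable lborel"
        unfolding hkernel_def by measurable
      moreover have "(\<lambda>x. indicator {0<..} x *\<^sub>R (hkernel lam mu nu x y * f x))
          = (\<lambda>x. hkernel lam mu nu x y * (indicator {0<..} x *\<^sub>R f x))"
        by (simp add: fun_eq_iff)
      ultimately show ?thesis unfolding set_borel_measurable_def by simp
    qed
    have norm_integrand: "(\<integral>\<^sup>+x. ennreal (norm (indicator {0<..} x *\<^sub>R (hkernel lam mu nu x y * f x))) \<partial>lborel)
        = (\<integral>\<^sup>+x\<in>{0<..}. ennreal \<bar>hkernel lam mu nu x y * f x\<bar> \<partial>lborel)" for y
      by (intro nn_integral_cong) (simp split: split_indicator)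
    show integrable: "set_integrable lborel {0<..} (\<lambda>x. hkernel lam mu nu x y * f x)"
      if "y > 0" for y
      using measurable[of y] le_less_trans[OF bound[OF that]]
      unfolding set_integrable_def set_borel_measurable_def integrable_iff_bounded norm_integrand
      by simp
    show "AE y in lborel. y > 0 \<longrightarrow> \<bar>Hop lam mu nu f y\<bar> \<le> A powr (1/q) * Lp_alpha_norm p alpha f"
    proof (intro AE_I2 impI)
      fix y :: real assume "y > 0"
      have "ennreal \<bar>Hop lam mu nu f y\<bar>
          \<le> (\<integral>\<^sup>+x\<in>{0<..}. ennreal \<bar>hkernel lam mu nu x y * f x\<bar> \<partial>lborel)"
        using integral_norm_bound_ennreal[OF integrable[OF \<open>y > 0\<close>, unfolded set_integrable_def]]
        unfolding Hop_def set_lebesgue_integral_def norm_integrand by simp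
      also have "\<dots> \<le> ennreal (A powr (1/q) * Lp_alpha_norm p alpha f)" by (rule bound[OF \<open>y > 0\<close>])
      finally have "ennreal \<bar>Hop lam mu nu f y\<bar> \<le> ennreal (A powr (1/q) * Lp_alpha_norm p alpha f)" .
      moreover have "0 \<le> A powr (1/q) * Lp_alpha_norm p alpha f" by (simp add: Lp_alpha_norm_def)
      ultimately show "\<bar>Hop lam mu nu f y\<bar> \<le> A powr (1/q) * Lp_alpha_norm p alpha f" by simp
    qed
  qed
qed

lemma exponent_conditions_iff:
  fixes p alpha lam mu nu :: real
  assumes "1 < p" and "lam = mu + nu + 1 - (alpha + 1) / p"
  shows "p * (mu + 1 - lam) < alpha + 1 \<longleftrightarrow> 0 < nu"
    and "alpha + 1 < p * (mu + 1) \<longleftrightarrow> nu < lam"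
proof -
  have alpha: "alpha + 1 = p * (mu + nu + 1 - lam)" using assms by (simp add: field_simps)
  have "p * (mu + 1 - lam) < p * (mu + nu + 1 - lam) \<longleftrightarrow> mu + 1 - lam < mu + nu + 1 - lam"
    using assms(1) by (intro mult_less_cancel_left_pos) simp
  then show "p * (mu + 1 - lam) < alpha + 1 \<longleftrightarrow> 0 < nu" unfolding alpha by simp
  have "p * (mu + nu + 1 - lam) < p * (mu + 1) \<longleftrightarrow> mu + nu + 1 - lam < mu + 1"
    using assms(1) by (intro mult_less_cancel_left_pos) simp
  then show "alpha + 1 < p * (mu + 1) \<longleftrightarrow> nu < lam" unfolding alpha by simp
qed

theorem theorem6p3:
  fixes p alpha lam mu nu :: real
  assumes "1 < p"
  shows "(H_bounded p alpha lam mu nu \<longleftrightarrow>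
           (lam = mu + nu + 1 - (alpha + 1) / p \<and>
            p * (mu + 1 - lam) < alpha + 1 \<and> alpha + 1 < p * (mu + 1))) \<and>
         (H_bounded p alpha lam mu nu \<longleftrightarrow>
           (lam = mu + nu + 1 - (alpha + 1) / p \<and> 0 < nu \<and> nu < lam))"
proof (cases "lam = mu + nu + 1 - (alpha + 1) / p")
  case True
  then show ?thesis
    using exponent_conditions_iff[OF assms True] H_boundedI[OF assms True]
      H_bounded_imp_exponent_conditions[OF assms] by blast
next
  case False
  then show ?thesis using H_bounded_imp_exponent_conditions[OF assms] by blast
qed

end
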